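(* Let $\mu$ be a partition and write $\mathrm{Res}_\mu(t)=\sum_{j\in\mathbb{Z}}b_jt^j$. Let $k\in\mathbb{Z}$. (a) There is a removable cell of content $k$ if and only if: $b_{k-1}=b_k$ and $b_{k+1}=b_k-1$ (when $k>0$); or $b_{k+1}=b_k$ and $b_{k-1}=b_k-1$ (when $k<0$); or $b_{-1}=b_1$ and $b_0=b_1+1$ (when $k=0$). (b) There is an addable cell of content $k$ if and only if: $b_{k+1}=b_k$ and $b_{k-1}=b_k+1$ (when $k>0$); or $b_{k-1}=b_k$ and $b_{k+1}=b_k+1$ (when $k<0$); or $b_{-1}=b_0=b_1$ (when $k=0$). (c) No cell of content $k$ is addable or removable if and only if: $b_{k+1}=b_k=b_{k-1}$ or $b_{k+1}=b_k-1=b_{k-1}-2$ (when $k>0$); or $b_{k+1}=b_k=b_{k-1}$ or $b_{k+1}=b_k+1=b_{k-1}+2$ (when $k<0$); or $b_{-1}=b_0=b_1+1$ or $b_1=b_0=b_{-1}+1$ (when $k=0$).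
   Context: $\mathrm{Res}_\mu(t)=\sum_{\square\in\mu}t^{c(\square)}$, where $c(i,j)=j-i$ is the content of a cell $(i,j)$ of the Young diagram $\{(i,j):1\le j\le\mu_i\}$. A cell of $\mu$ is removable if deleting it leaves a Young diagram. A cell not in $\mu$ is addable if adding it gives a Young diagram. *)

theory Defs
  imports Main
begin

definition is_partition :: "nat list \<Rightarrow> bool" where
  "is_partition mu \<longleftrightarrow> sorted (rev mu) \<and> (\<forall>x\<in>set mu. 0 < x)"

definition cells :: "nat list \<Rightarrow> (nat \<times> nat) set" where
  "cells mu = {(i, j). 1 \<le> i \<and> i \<le> length mu \<and> 1 \<le> j \<and> j \<le> mu ! (i - 1)}"

definition content :: "nat \<times> nat \<Rightarrow> int" where
  "content c = int (snd c) - int (fst c)"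

definition young_diagram :: "(nat \<times> nat) set \<Rightarrow> bool" where
  "young_diagram D \<longleftrightarrow> (\<exists>nu. is_partition nu \<and> D = cells nu)"

definition removable :: "nat list \<Rightarrow> nat \<times> nat \<Rightarrow> bool" where
  "removable mu c \<longleftrightarrow> c \<in> cells mu \<and> young_diagram (cells mu - {c})"

definition addable :: "nat list \<Rightarrow> nat \<times> nat \<Rightarrow> bool" where
  "addable mu c \<longleftrightarrow> c \<notin> cells mu \<and> young_diagram (insert c (cells mu))"

text \<open>Coefficient b_j of t^j in Res_mu(t) = sum over cells of t^content.\<close>
definition res_coeff :: "nat list \<Rightarrow> int \<Rightarrow> int" where
  "res_coeff mu j = int (card {c \<in> cells mu. content c = j})"

end

theory Submission
  imports Defs
begin

text \<open>Record the partition by its Maya diagram \<open>M = {\<mu>\<^sub>i - i | i \<ge> 1}\<close>: row \<open>i\<close>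
  contributes the content of its last cell (for an empty row, of the virtual cell \<open>(i,0)\<close>),
  and these numbers strictly decrease in \<open>i\<close>. A removable cell of content \<open>k\<close> exists iff
  \<open>k \<in> M\<close> and \<open>k - 1 \<notin> M\<close>; an addable one iff \<open>k - 1 \<in> M\<close> and \<open>k \<notin> M\<close>.
  Counting the cells of content \<open>k\<close> row by row gives
  \<open>b\<^sub>k = #{i \<ge> 1. k \<le> \<mu>\<^sub>i - i} - max 0 (-k)\<close>, hence
  \<open>b\<^sub>k - b\<^sub>k\<^sub>+\<^sub>1 = [k \<in> M] - [k < 0]\<close>, and all three statements become a case
  analysis on whether \<open>k\<close> and \<open>k - 1\<close> lie in \<open>M\<close>.\<close>

definition row_length :: "nat list \<Rightarrow> nat \<Rightarrow> nat" where
  "row_length mu i = (if 1 \<le> i \<and> i \<le> length mu then mu ! (i - 1) else 0)"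

lemma cells_eq_row_length: "cells mu = {(i, j). 1 \<le> i \<and> 1 \<le> j \<and> j \<le> row_length mu i}"
  unfolding cells_def row_length_def by (auto split: if_splits)

lemma row_length_antimono:
  assumes "is_partition mu" "1 \<le> a" "a \<le> b"
  shows "row_length mu b \<le> row_length mu a"
proof (cases "b \<le> length mu")
  case True
  have "mu ! (b - 1) \<le> mu ! (a - 1)"
    using assms True by (intro sorted_rev_nth_mono) (auto simp: is_partition_def)
  then show ?thesis using assms True by (simp add: row_length_def)
qed (simp add: row_length_def)

lemma row_length_pos_iff:
  assumes "is_partition mu" "1 \<le> i"
  shows "0 < row_length mu i \<longleftrightarrow> i \<le> length mu"
proof -
  have "i \<le> length mu \<Longrightarrow> 0 < mu ! (i - 1)"
    using assms by (auto simp: is_partition_def)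
  then show ?thesis using assms by (auto simp: row_length_def)
qed

lemma cells_down_closed:
  assumes "is_partition nu" "(i, j) \<in> cells nu" "1 \<le> i'" "i' \<le> i" "1 \<le> j'" "j' \<le> j"
  shows "(i', j') \<in> cells nu"
  using assms row_length_antimono[OF assms(1,3,4)] by (auto simp: cells_eq_row_length)

lemma young_diagram_of_row_lengths:
  assumes antimono: "\<And>a b. 1 \<le> a \<Longrightarrow> a \<le> b \<Longrightarrow> g b \<le> g a"
    and pos_iff: "\<And>i. 1 \<le> i \<Longrightarrow> 0 < g i \<longleftrightarrow> i \<le> m"
  shows "young_diagram {(i, j). 1 \<le> i \<and> 1 \<le> j \<and> j \<le> g i}"
proof -
  define nu where "nu = map g [1..<m+1]"
  have len: "length nu = m" by (simp add: nu_def)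
  have nth: "i < m \<Longrightarrow> nu ! i = g (i + 1)" for i
    unfolding nu_def by (simp del: upt_Suc add: nth_map_upt)
  have "is_partition nu"
    unfolding is_partition_def sorted_rev_iff_nth_mono
  proof (intro conjI allI impI ballI)
    fix i j assume "i \<le> j" "j < length nu"
    then show "nu ! j \<le> nu ! i" using len nth antimono[of "i+1" "j+1"] by simp
  next
    fix x assume "x \<in> set nu"
    then obtain i where "i < m" "x = nu ! i" using len by (metis in_set_conv_nth)
    then show "0 < x" using nth pos_iff[of "i+1"] by simp
  qed
  moreover have "row_length nu i = g i" if "1 \<le> i" for i
  proof (cases "i \<le> m")
    case True
    then show ?thesis using that nth[of "i-1"] len by (simp add: row_length_def)
  next
    case False
    then show ?thesis using that pos_iff[of i] len by (simp add: row_length_def)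
  qed
  then have "cells nu = {(i, j). 1 \<le> i \<and> 1 \<le> j \<and> j \<le> g i}"
    unfolding cells_eq_row_length by auto
  ultimately show ?thesis unfolding young_diagram_def by blast
qed

lemma removable_iff_corner:
  assumes mu: "is_partition mu"
  shows "removable mu c \<longleftrightarrow>
    (\<exists>i. 1 \<le> i \<and> 1 \<le> row_length mu i \<and> row_length mu (i+1) < row_length mu i
         \<and> c = (i, row_length mu i))"
proof
  assume "removable mu c"
  then obtain nu where c: "c \<in> cells mu" and nu: "is_partition nu"
    and eq: "cells mu - {c} = cells nu"
    unfolding removable_def young_diagram_def by auto
  obtain i j where cij: "c = (i, j)" by (cases c)
  have ij: "1 \<le> i" "1 \<le> j" "j \<le> row_length mu i"
    using c cij by (auto simp: cells_eq_row_length)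
  have beyond: "(i', j') \<notin> cells mu" if "i \<le> i'" "j \<le> j'" "(i', j') \<noteq> c" for i' j'
  proof
    assume "(i', j') \<in> cells mu"
    then have "(i', j') \<in> cells nu" using eq that(3) by auto
    then have "c \<in> cells nu" unfolding cij by (rule cells_down_closed[OF nu]) (use ij that in auto)
    then show False using eq by blast
  qed
  have j: "j = row_length mu i"
    using beyond[of i "j+1"] ij cij by (auto simp: cells_eq_row_length)
  moreover have "row_length mu (i+1) < row_length mu i"
    using beyond[of "i+1" j] ij cij j by (auto simp: cells_eq_row_length)
  ultimately show "\<exists>i. 1 \<le> i \<and> 1 \<le> row_length mu i \<and> row_length mu (i+1) < row_length mu i
         \<and> c = (i, row_length mu i)"
    using ij cij by auto
next
  assume "\<exists>i. 1 \<le> i \<and> 1 \<le> row_length mu i \<and> row_length mu (i+1) < row_length mu i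
         \<and> c = (i, row_length mu i)"
  then obtain i0 where i0: "1 \<le> i0" "1 \<le> row_length mu i0"
      "row_length mu (i0+1) < row_length mu i0"
    and c: "c = (i0, row_length mu i0)"
    by blast
  define g where "g = (row_length mu)(i0 := row_length mu i0 - 1)"
  have in_mu: "i0 \<le> length mu" using row_length_pos_iff[OF mu i0(1)] i0 by simp
  have last_row: "row_length mu i0 = 1 \<Longrightarrow> i0 = length mu"
    using row_length_pos_iff[OF mu, of "i0+1"] i0 in_mu by simp
  have "young_diagram {(i, j). 1 \<le> i \<and> 1 \<le> j \<and> j \<le> g i}"
  proof (rule young_diagram_of_row_lengths)
    fix a b :: nat assume ab: "1 \<le> a" "a \<le> b"
    show "g b \<le> g a"
    proof (cases "a = i0")
      case True
      then show ?thesis using ab row_length_antimono[OF mu, of "i0+1" b] i0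
        by (cases "b = i0") (auto simp: g_def)
    next
      case False
      then show ?thesis using ab row_length_antimono[OF mu, of a b] by (auto simp: g_def)
    qed
  next
    fix i :: nat assume i: "1 \<le> i"
    show "0 < g i \<longleftrightarrow> i \<le> (if row_length mu i0 = 1 then length mu - 1 else length mu)"
    proof (cases "i = i0")
      case True
      then show ?thesis using last_row in_mu i0 by (auto simp: g_def)
    next
      case False
      then show ?thesis using row_length_pos_iff[OF mu i] last_row i by (auto simp: g_def)
    qed
  qed
  moreover have "{(i, j). 1 \<le> i \<and> 1 \<le> j \<and> j \<le> g i} = cells mu - {c}"
    using i0 c by (auto simp: g_def cells_eq_row_length split: if_splits)
  moreover have "c \<in> cells mu" using i0 c by (auto simp: cells_eq_row_length)
  ultimately show "removable mu c" unfolding removable_def by simp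
qed

lemma addable_iff_corner:
  assumes mu: "is_partition mu"
  shows "addable mu c \<longleftrightarrow>
    (\<exists>i. 1 \<le> i \<and> (i = 1 \<or> row_length mu i < row_length mu (i-1))
         \<and> c = (i, row_length mu i + 1))"
proof
  assume "addable mu c"
  then obtain nu where c: "c \<notin> cells mu" and nu: "is_partition nu"
    and eq: "insert c (cells mu) = cells nu"
    unfolding addable_def young_diagram_def by auto
  obtain i j where cij: "c = (i, j)" by (cases c)
  have ij: "1 \<le> i" "1 \<le> j" using eq cij by (auto simp: cells_eq_row_length)
  have outside: "row_length mu i < j" using c cij ij by (auto simp: cells_eq_row_length)
  have below: "(i', j') \<in> cells mu" if "1 \<le> i'" "i' \<le> i" "1 \<le> j'" "j' \<le> j" "(i', j') \<noteq> c"
    for i' j'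
  proof -
    have "c \<in> cells nu" using eq by blast
    then have "(i', j') \<in> cells nu" unfolding cij by (rule cells_down_closed[OF nu]) (use that in auto)
    then show ?thesis using eq that(5) by auto
  qed
  have "j - 1 \<le> row_length mu i"
    using below[of i "j-1"] ij cij by (cases "j = 1") (auto simp: cells_eq_row_length)
  then have j: "j = row_length mu i + 1" using outside by simp
  have "j \<le> row_length mu (i-1)" if "i \<noteq> 1"
    using below[of "i-1" j] ij cij that by (auto simp: cells_eq_row_length)
  then have "i = 1 \<or> row_length mu i < row_length mu (i-1)" using outside by fastforce
  then show "\<exists>i. 1 \<le> i \<and> (i = 1 \<or> row_length mu i < row_length mu (i-1))
         \<and> c = (i, row_length mu i + 1)"
    using ij cij j by auto
next
  assume "\<exists>i. 1 \<le> i \<and> (i = 1 \<or> row_length mu i < row_length mu (i-1))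
         \<and> c = (i, row_length mu i + 1)"
  then obtain i0 where i0: "1 \<le> i0" "i0 = 1 \<or> row_length mu i0 < row_length mu (i0-1)"
    and c: "c = (i0, row_length mu i0 + 1)"
    by blast
  define g where "g = (row_length mu)(i0 := row_length mu i0 + 1)"
  have first_empty: "row_length mu i0 = 0 \<Longrightarrow> i0 = length mu + 1"
  proof -
    assume empty: "row_length mu i0 = 0"
    then have "length mu < i0" using row_length_pos_iff[OF mu i0(1)] by simp
    moreover have "i0 - 1 \<le> length mu"
      using i0 empty row_length_pos_iff[OF mu, of "i0 - 1"] by (cases "i0 = 1") simp_all
    ultimately show ?thesis by simp
  qed
  have "young_diagram {(i, j). 1 \<le> i \<and> 1 \<le> j \<and> j \<le> g i}"
  proof (rule young_diagram_of_row_lengths)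
    fix a b :: nat assume ab: "1 \<le> a" "a \<le> b"
    show "g b \<le> g a"
    proof (cases "b = i0")
      case True
      show ?thesis
      proof (cases "a = i0")
        case False
        then have "a \<le> i0 - 1" "i0 \<noteq> 1" using ab True by auto
        then show ?thesis using True False ab row_length_antimono[OF mu, of a "i0 - 1"] i0
          by (auto simp: g_def)
      qed (simp add: True)
    next
      case False
      then show ?thesis using ab row_length_antimono[OF mu, of a b] by (auto simp: g_def)
    qed
  next
    fix i :: nat assume i: "1 \<le> i"
    show "0 < g i \<longleftrightarrow> i \<le> (if row_length mu i0 = 0 then length mu + 1 else length mu)"
    proof (cases "i = i0")
      case True
      then show ?thesis using row_length_pos_iff[OF mu i0(1)] first_empty by (simp add: g_def)
    next
      case False
      then show ?thesis using row_length_pos_iff[OF mu i] first_empty i by (auto simp: g_def)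
    qed
  qed
  moreover have "{(i, j). 1 \<le> i \<and> 1 \<le> j \<and> j \<le> g i} = insert c (cells mu)"
    using i0 c by (auto simp: g_def cells_eq_row_length split: if_splits)
  moreover have "c \<notin> cells mu" using i0 c by (auto simp: cells_eq_row_length)
  ultimately show "addable mu c" unfolding addable_def by simp
qed

definition maya :: "nat list \<Rightarrow> nat \<Rightarrow> int" where
  "maya mu i = int (row_length mu i) - int i"

lemma maya_strict_antimono:
  assumes "is_partition mu" "1 \<le> i" "i < i'"
  shows "maya mu i' < maya mu i"
  using row_length_antimono[OF assms(1,2), of i'] assms(3) by (simp add: maya_def)

lemma maya_inj:
  assumes "is_partition mu" "1 \<le> i" "1 \<le> i'" "maya mu i = maya mu i'"
  shows "i = i'"
  using maya_strict_antimono[OF assms(1,2), of i'] maya_strict_antimono[OF assms(1,3), of i] assms(4)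
  by (cases i i' rule: linorder_cases) auto

lemma maya_pred_mem_iff:
  assumes mu: "is_partition mu" and i: "1 \<le> i"
  shows "maya mu i - 1 \<in> maya mu ` {1..} \<longleftrightarrow> maya mu (i+1) = maya mu i - 1"
proof
  assume "maya mu i - 1 \<in> maya mu ` {1..}"
  then obtain i' where i': "1 \<le> i'" "maya mu i' = maya mu i - 1" by auto
  then have "i < i'"
    using maya_strict_antimono[OF mu i'(1), of i] by (cases i i' rule: linorder_cases) auto
  then have "maya mu i' \<le> maya mu (i+1)"
    using maya_strict_antimono[OF mu, of "i+1" i'] by (cases "i' = i+1") (auto simp: less_imp_le)
  then show "maya mu (i+1) = maya mu i - 1"
    using i' maya_strict_antimono[OF mu i, of "i+1"] by simp
next
  assume "maya mu (i+1) = maya mu i - 1"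
  then show "maya mu i - 1 \<in> maya mu ` {1..}" by (intro image_eqI[of _ _ "i+1"]) auto
qed

lemma maya_succ_mem_iff:
  assumes mu: "is_partition mu" and i: "1 \<le> i"
  shows "maya mu i + 1 \<in> maya mu ` {1..} \<longleftrightarrow> 2 \<le> i \<and> maya mu (i-1) = maya mu i + 1"
proof
  assume "maya mu i + 1 \<in> maya mu ` {1..}"
  then obtain i' where i': "1 \<le> i'" "maya mu i' = maya mu i + 1" by auto
  then have "i' < i"
    using maya_strict_antimono[OF mu i, of i'] by (cases i i' rule: linorder_cases) auto
  then have "maya mu (i-1) \<le> maya mu i'"
    using maya_strict_antimono[OF mu i'(1), of "i-1"] by (cases "i' = i-1") (auto simp: less_imp_le)
  moreover have "1 \<le> i - 1" "i - 1 < i" using i'(1) \<open>i' < i\<close> by auto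
  ultimately show "2 \<le> i \<and> maya mu (i-1) = maya mu i + 1"
    using i' maya_strict_antimono[OF mu] by fastforce
next
  assume "2 \<le> i \<and> maya mu (i-1) = maya mu i + 1"
  then show "maya mu i + 1 \<in> maya mu ` {1..}" by (intro image_eqI[of _ _ "i-1"]) auto
qed

lemma removable_content_iff:
  assumes mu: "is_partition mu"
  shows "(\<exists>c. removable mu c \<and> content c = k) \<longleftrightarrow>
    k \<in> maya mu ` {1..} \<and> k - 1 \<notin> maya mu ` {1..}"
proof -
  have corner: "1 \<le> row_length mu i \<and> row_length mu (i+1) < row_length mu i
      \<longleftrightarrow> maya mu (i+1) \<noteq> maya mu i - 1" if "1 \<le> i" for i
    using maya_strict_antimono[OF mu that, of "i+1"] by (auto simp: maya_def)
  have "content (i, row_length mu i) = maya mu i" for i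
    by (simp add: content_def maya_def)
  then have "(\<exists>c. removable mu c \<and> content c = k) \<longleftrightarrow>
      (\<exists>i\<ge>1. (1 \<le> row_length mu i \<and> row_length mu (i+1) < row_length mu i) \<and> maya mu i = k)"
    unfolding removable_iff_corner[OF mu] by auto
  also have "\<dots> \<longleftrightarrow> (\<exists>i\<ge>1. maya mu i - 1 \<notin> maya mu ` {1..} \<and> maya mu i = k)"
    using corner maya_pred_mem_iff[OF mu] by blast
  also have "\<dots> \<longleftrightarrow> k \<in> maya mu ` {1..} \<and> k - 1 \<notin> maya mu ` {1..}"
    by force
  finally show ?thesis .
qed

lemma addable_content_iff:
  assumes mu: "is_partition mu"
  shows "(\<exists>c. addable mu c \<and> content c = k) \<longleftrightarrow>
    k - 1 \<in> maya mu ` {1..} \<and> k \<notin> maya mu ` {1..}"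
proof -
  have corner: "i = 1 \<or> row_length mu i < row_length mu (i-1)
      \<longleftrightarrow> \<not> (2 \<le> i \<and> maya mu (i-1) = maya mu i + 1)" if "1 \<le> i" for i
  proof (cases "i = 1")
    case False
    then have "1 \<le> i - 1" "i - 1 \<le> i" using that by auto
    then have "row_length mu i \<le> row_length mu (i-1)"
      by (rule row_length_antimono[OF mu])
    moreover have "maya mu (i-1) = maya mu i + 1 \<longleftrightarrow> row_length mu (i-1) = row_length mu i"
      using that by (simp add: maya_def of_nat_diff)
    ultimately show ?thesis using False that by auto
  qed simp
  have "content (i, row_length mu i + 1) = maya mu i + 1" for i
    by (simp add: content_def maya_def)
  then have "(\<exists>c. addable mu c \<and> content c = k) \<longleftrightarrow>
      (\<exists>i\<ge>1. (i = 1 \<or> row_length mu i < row_length mu (i-1)) \<and> maya mu i + 1 = k)"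
    unfolding addable_iff_corner[OF mu] by auto
  also have "\<dots> \<longleftrightarrow> (\<exists>i\<ge>1. maya mu i + 1 \<notin> maya mu ` {1..} \<and> maya mu i + 1 = k)"
    using corner maya_succ_mem_iff[OF mu] by blast
  also have "\<dots> \<longleftrightarrow> k - 1 \<in> maya mu ` {1..} \<and> k \<notin> maya mu ` {1..}"
    by force
  finally show ?thesis .
qed

lemma finite_maya_atLeast:
  assumes "is_partition mu"
  shows "finite {i. 1 \<le> i \<and> k \<le> maya mu i}"
proof (rule finite_subset)
  show "{i. 1 \<le> i \<and> k \<le> maya mu i} \<subseteq> {..nat (int (row_length mu 1) - k)}"
  proof
    fix i assume i: "i \<in> {i. 1 \<le> i \<and> k \<le> maya mu i}"
    then have "row_length mu i \<le> row_length mu 1" using row_length_antimono[OF assms, of 1 i] by simp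
    then show "i \<in> {..nat (int (row_length mu 1) - k)}" using i by (auto simp: maya_def le_nat_iff)
  qed
qed simp

lemma card_maya_eq:
  assumes mu: "is_partition mu"
  shows "card {i. 1 \<le> i \<and> maya mu i = k} = (if k \<in> maya mu ` {1..} then 1 else 0)"
proof (cases "k \<in> maya mu ` {1..}")
  case True
  then obtain i0 where i0: "1 \<le> i0" "maya mu i0 = k" by auto
  then have "{i. 1 \<le> i \<and> maya mu i = k} = {i0}" using maya_inj[OF mu] by blast
  then show ?thesis using True by simp
next
  case False
  then have "{i. 1 \<le> i \<and> maya mu i = k} = {}" by force
  then show ?thesis using False by (simp only: card.empty if_False)
qed

lemma card_maya_atLeast_step:
  assumes mu: "is_partition mu"
  shows "card {i. 1 \<le> i \<and> k \<le> maya mu i} =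
    card {i. 1 \<le> i \<and> k + 1 \<le> maya mu i} + (if k \<in> maya mu ` {1..} then 1 else 0)"
proof -
  have "{i. 1 \<le> i \<and> k \<le> maya mu i} =
      {i. 1 \<le> i \<and> k + 1 \<le> maya mu i} \<union> {i. 1 \<le> i \<and> maya mu i = k}"
    by auto
  moreover have "finite {i. 1 \<le> i \<and> maya mu i = k}"
    by (rule finite_subset[OF _ finite_maya_atLeast[OF mu, of k]]) auto
  ultimately show ?thesis
    using finite_maya_atLeast[OF mu, of "k+1"] card_maya_eq[OF mu, of k]
    by (simp add: card_Un_disjoint disjoint_iff)
qed

lemma res_coeff_eq_card_maya_atLeast:
  assumes mu: "is_partition mu"
  shows "res_coeff mu k = int (card {i. 1 \<le> i \<and> k \<le> maya mu i}) - int (nat (- k))"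
proof -
  let ?A = "{i. 1 \<le> i \<and> k \<le> maya mu i}"
  let ?low = "{1..nat (- k)}"
  have "{c \<in> cells mu. content c = k} = (\<lambda>i. (i, nat (int i + k))) ` (?A - ?low)"
  proof (intro set_eqI iffI)
    fix c assume "c \<in> {c \<in> cells mu. content c = k}"
    then obtain i j where "c = (i, j)" "1 \<le> i" "1 \<le> j" "j \<le> row_length mu i" "int j - int i = k"
      by (cases c) (auto simp: cells_eq_row_length content_def)
    then show "c \<in> (\<lambda>i. (i, nat (int i + k))) ` (?A - ?low)"
      by (intro image_eqI[of _ _ i]) (auto simp: maya_def)
  qed (auto simp: cells_eq_row_length content_def maya_def)
  moreover have "inj_on (\<lambda>i. (i, nat (int i + k))) (?A - ?low)" by (rule inj_onI) simp
  moreover have "?low \<subseteq> ?A" by (auto simp: maya_def)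
  ultimately show ?thesis
    using finite_maya_atLeast[OF mu, of k] card_mono[of ?A ?low]
    by (simp add: res_coeff_def card_image card_Diff_subset of_nat_diff)
qed

theorem lemma9p10:
  fixes mu :: "nat list" and k :: int
  assumes "is_partition mu"
  defines "b \<equiv> res_coeff mu"
  shows
   "((\<exists>c. removable mu c \<and> content c = k) \<longleftrightarrow>
       (if k > 0 then b (k - 1) = b k \<and> b (k + 1) = b k - 1
        else if k < 0 then b (k + 1) = b k \<and> b (k - 1) = b k - 1
        else b (-1) = b 1 \<and> b 0 = b 1 + 1))
    \<and> ((\<exists>c. addable mu c \<and> content c = k) \<longleftrightarrow>
       (if k > 0 then b (k + 1) = b k \<and> b (k - 1) = b k + 1
        else if k < 0 then b (k - 1) = b k \<and> b (k + 1) = b k + 1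
        else b (-1) = b 0 \<and> b 0 = b 1))
    \<and> ((\<not> (\<exists>c. content c = k \<and> (addable mu c \<or> removable mu c))) \<longleftrightarrow>
       (if k > 0 then (b (k + 1) = b k \<and> b k = b (k - 1))
                      \<or> (b (k + 1) = b k - 1 \<and> b k - 1 = b (k - 1) - 2)
        else if k < 0 then (b (k + 1) = b k \<and> b k = b (k - 1))
                      \<or> (b (k + 1) = b k + 1 \<and> b k + 1 = b (k - 1) + 2)
        else (b (-1) = b 0 \<and> b 0 = b 1 + 1) \<or> (b 1 = b 0 \<and> b 0 = b (-1) + 1)))"
proof -
  note mu = assms(1)
  define p where "p = (k \<in> maya mu ` {1..})"
  define q where "q = (k - 1 \<in> maya mu ` {1..})"
  define x where "x = int (card {i. 1 \<le> i \<and> k + 1 \<le> maya mu i})"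
  have "b (k + 1) = x - int (nat (- (k + 1)))"
    unfolding b_def x_def by (rule res_coeff_eq_card_maya_atLeast[OF mu])
  moreover have "b k = x + (if p then 1 else 0) - int (nat (- k))"
    unfolding b_def x_def p_def res_coeff_eq_card_maya_atLeast[OF mu]
      card_maya_atLeast_step[OF mu, of k] by simp
  moreover have "b (k - 1) = x + (if p then 1 else 0) + (if q then 1 else 0) - int (nat (- (k - 1)))"
    unfolding b_def x_def p_def q_def res_coeff_eq_card_maya_atLeast[OF mu]
    using card_maya_atLeast_step[OF mu, of "k - 1"] card_maya_atLeast_step[OF mu, of k] by simp
  moreover have "(\<not> (\<exists>c. content c = k \<and> (addable mu c \<or> removable mu c))) \<longleftrightarrow>
      \<not> (\<exists>c. addable mu c \<and> content c = k) \<and> \<not> (\<exists>c. removable mu c \<and> content c = k)"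
    by blast
  ultimately show ?thesis
    unfolding removable_content_iff[OF mu] addable_content_iff[OF mu] p_def[symmetric] q_def[symmetric]
    by (cases p; cases q; cases k "0::int" rule: linorder_cases) (simp_all add: int_nat_eq)
qed

end
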